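(* For every cell $\eta\in\Delta_k$ there is a unique cell $\eta'\in\Delta_{n-k}$ with $\mathsf{t}(\eta')=\mathsf{h}(\eta)$, $\mathsf{h}(\eta')=\mathsf{t}(\eta)$ and $x^{\operatorname{div}(\eta')}=x_1x_2\cdots x_n/x^{\operatorname{div}(\eta)}$, and the map $\tau:\Delta\to\Delta$, $\eta\mapsto\eta'$, is an involution.
   Context: $\mathbb{k}$ is an algebraically closed field, $G\subset\operatorname{SL}(n,\mathbb{k})$ a finite abelian group of diagonal matrices with $\operatorname{char}\mathbb{k}\nmid|G|$, $\rho_i\in G^*$ the $i$-th diagonal entry. Let $\deg:\mathbb{Z}^n\to G^*$, $\chi_i\mapsto\rho_i$, $M=\ker\deg$, $\mathbb{T}^n=\mathbb{R}^n/M$. For $u\in\mathbb{Z}^n$ and $S\subseteq\{1,\dots,n\}$ let $F(u,S)=\{u+\sum_{i\in S}\lambda_i\chi_i:0\le\lambda_i\le1\}$. The toric cell complex $\Delta$ is the set of images in $\mathbb{T}^n$ of the sets $F(u,S)$; $\Delta_k$ consists of those with $|S|=k$. For $\eta$ the image of $F(u,S)$: tail $\mathsf{t}(\eta)=\deg u\in G^*$, head $\mathsf{h}(\eta)=\deg(u+\sum_{i\in S}\chi_i)\in G^*$, label $\operatorname{div}(\eta)=\sum_{i\in S}\chi_i$, $x^{\operatorname{div}(\eta)}=\prod_{i\in S}x_i$. *)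

theory Defs
  imports Complex_Main "HOL-Computational_Algebra.Polynomial" "HOL-Library.FuncSet"
begin

text \<open>The index set {1..n} is a finite type 'n (n = CARD('n)).
  A diagonal matrix is represented by its diagonal g :: 'n => 'k, so G is a
  set of diagonals. A character of G is a function G -> 'k (restricted to G,
  undefined outside); the group G* carries pointwise multiplication.
  rho_i is the character g |-> g i.\<close>

definition diag_group :: "('n::finite \<Rightarrow> 'k::field) set \<Rightarrow> bool" where
  "diag_group G \<longleftrightarrow> finite G \<and> (\<lambda>i. 1) \<in> G
     \<and> (\<forall>g\<in>G. \<forall>h\<in>G. (\<lambda>i. g i * h i) \<in> G)
     \<and> (\<forall>g\<in>G. (\<forall>i. g i \<noteq> 0) \<and> (\<lambda>i. inverse (g i)) \<in> G)"

text \<open>Membership in SL(n,k): determinant of a diagonal matrix is the product of the diagonal.\<close>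
definition in_SL :: "('n::finite \<Rightarrow> 'k::field) set \<Rightarrow> bool" where
  "in_SL G \<longleftrightarrow> (\<forall>g\<in>G. (\<Prod>i\<in>UNIV. g i) = 1)"

definition rho :: "('n::finite \<Rightarrow> 'k::field) set \<Rightarrow> 'n \<Rightarrow> ('n \<Rightarrow> 'k) \<Rightarrow> 'k" where
  "rho G i = restrict (\<lambda>g. g i) G"

definition deg :: "('n::finite \<Rightarrow> 'k::field) set \<Rightarrow> ('n \<Rightarrow> int) \<Rightarrow> ('n \<Rightarrow> 'k) \<Rightarrow> 'k" where
  "deg G u = restrict (\<lambda>g. \<Prod>i\<in>UNIV. g i powi u i) G"

definition kerM :: "('n::finite \<Rightarrow> 'k::field) set \<Rightarrow> ('n \<Rightarrow> int) set" where
  "kerM G = {m. deg G m = deg G (\<lambda>i. 0)}"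

text \<open>A point of the torus R^n / M, represented as the coset x + M.\<close>
definition torus_pt :: "('n::finite \<Rightarrow> 'k::field) set \<Rightarrow> ('n \<Rightarrow> real) \<Rightarrow> ('n \<Rightarrow> real) set" where
  "torus_pt G x = {y. \<exists>m\<in>kerM G. y = (\<lambda>i. x i + of_int (m i))}"

definition chiS :: "'n set \<Rightarrow> 'n \<Rightarrow> int" where
  "chiS S = (\<lambda>i. if i \<in> S then 1 else 0)"

definition Fcube :: "('n \<Rightarrow> int) \<Rightarrow> 'n set \<Rightarrow> ('n \<Rightarrow> real) set" where
  "Fcube u S = {(\<lambda>i. of_int (u i) + (if i \<in> S then lam i else 0)) | lam.
                  \<forall>i\<in>S. 0 \<le> lam i \<and> lam i \<le> 1}"

definition cell :: "('n::finite \<Rightarrow> 'k::field) set \<Rightarrow> ('n \<Rightarrow> int) \<Rightarrow> 'n set \<Rightarrow> ('n \<Rightarrow> real) set set" where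
  "cell G u S = torus_pt G ` Fcube u S"

definition Delta :: "('n::finite \<Rightarrow> 'k::field) set \<Rightarrow> ('n \<Rightarrow> real) set set set" where
  "Delta G = {cell G u S | u S. True}"

definition Delta_k :: "('n::finite \<Rightarrow> 'k::field) set \<Rightarrow> nat \<Rightarrow> ('n \<Rightarrow> real) set set set" where
  "Delta_k G k = {cell G u S | u S. card S = k}"

definition rep :: "('n::finite \<Rightarrow> 'k::field) set \<Rightarrow> ('n \<Rightarrow> real) set set \<Rightarrow> ('n \<Rightarrow> int) \<times> 'n set" where
  "rep G \<eta> = (SOME p. \<eta> = cell G (fst p) (snd p))"

definition tail :: "('n::finite \<Rightarrow> 'k::field) set \<Rightarrow> ('n \<Rightarrow> real) set set \<Rightarrow> ('n \<Rightarrow> 'k) \<Rightarrow> 'k" where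
  "tail G \<eta> = deg G (fst (rep G \<eta>))"

definition head :: "('n::finite \<Rightarrow> 'k::field) set \<Rightarrow> ('n \<Rightarrow> real) set set \<Rightarrow> ('n \<Rightarrow> 'k) \<Rightarrow> 'k" where
  "head G \<eta> = deg G (\<lambda>i. fst (rep G \<eta>) i + chiS (snd (rep G \<eta>)) i)"

text \<open>div(eta) = sum_{i in S} chi_i; the monomial x^div(eta) is determined by this exponent vector.\<close>
definition cdiv :: "('n::finite \<Rightarrow> 'k::field) set \<Rightarrow> ('n \<Rightarrow> real) set set \<Rightarrow> 'n \<Rightarrow> int" where
  "cdiv G \<eta> = chiS (snd (rep G \<eta>))"

definition tau :: "('n::finite \<Rightarrow> 'k::field) set \<Rightarrow> ('n \<Rightarrow> real) set set \<Rightarrow> ('n \<Rightarrow> real) set set" where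
  "tau G \<eta> = (THE \<eta>'. \<eta>' \<in> Delta G \<and> tail G \<eta>' = head G \<eta> \<and> head G \<eta>' = tail G \<eta>
                      \<and> cdiv G \<eta>' = (\<lambda>i. 1 - cdiv G \<eta> i))"

end

theory Submission
  imports Defs
begin

text \<open>A cell determines its cube \<open>F(u,S)\<close> up to translation by \<open>M\<close>: a point congruent modulo \<open>M\<close>
  to the centre of \<open>F(u',S')\<close> can lie in \<open>F(u,S)\<close> only if \<open>S' \<subseteq> S\<close>, and for \<open>S' = S\<close> only if
  \<open>u' \<equiv> u\<close> modulo \<open>M\<close>. Hence tail, head and label of \<open>cell u S\<close> are \<open>deg u\<close>, \<open>deg (u + \<chi>\<^sub>S)\<close>
  and \<open>\<chi>\<^sub>S\<close>, and the conditions on \<open>\<eta>'\<close> force \<open>\<eta>' = cell (u + \<chi>\<^sub>S) (-S)\<close>. Since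
  \<open>G \<subseteq> SL(n)\<close>, the all-ones vector \<open>\<chi>\<^sub>S + \<chi>\<^sub>-\<^sub>S\<close> lies in \<open>M\<close>; this gives the head condition for
  \<open>\<eta>'\<close> and \<open>\<tau>(\<tau>(cell u S)) = cell (u + 1) S = cell u S\<close>.\<close>

definition deg_at :: "('n::finite \<Rightarrow> 'k::field) \<Rightarrow> ('n \<Rightarrow> int) \<Rightarrow> 'k" where
  "deg_at g u = (\<Prod>i\<in>UNIV. g i powi u i)"

lemma deg_at_add:
  "(\<And>i. g i \<noteq> 0) \<Longrightarrow> deg_at g (\<lambda>i. u i + v i) = deg_at g u * deg_at g v"
  by (simp add: deg_at_def power_int_add prod.distrib)

lemma deg_at_nonzero: "(\<And>i. g i \<noteq> 0) \<Longrightarrow> deg_at g u \<noteq> 0"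
  by (simp add: deg_at_def)

lemma deg_eq_iff: "deg G u = deg G v \<longleftrightarrow> (\<forall>g\<in>G. deg_at g u = deg_at g v)"
  by (auto simp: deg_def deg_at_def restrict_def fun_eq_iff)

lemma kerM_iff: "m \<in> kerM G \<longleftrightarrow> (\<forall>g\<in>G. deg_at g m = 1)"
  by (simp add: kerM_def deg_eq_iff deg_at_def)

lemma diag_group_nonzero: "diag_group G \<Longrightarrow> g \<in> G \<Longrightarrow> g i \<noteq> 0"
  by (simp add: diag_group_def)

lemma deg_eq_iff_diff_kerM:
  assumes "diag_group G"
  shows "deg G u = deg G v \<longleftrightarrow> (\<lambda>i. u i - v i) \<in> kerM G"
proof -
  have "deg_at g u = deg_at g v \<longleftrightarrow> deg_at g (\<lambda>i. u i - v i) = 1" if "g \<in> G" for g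
  proof -
    have nz: "\<And>i. g i \<noteq> 0" using diag_group_nonzero[OF assms that] .
    have "deg_at g u = deg_at g (\<lambda>i. u i - v i) * deg_at g v"
      using deg_at_add[of g "\<lambda>i. u i - v i" v] nz by simp
    with deg_at_nonzero[of g v] nz show ?thesis by auto
  qed
  then show ?thesis by (simp add: deg_eq_iff kerM_iff)
qed

lemma kerM_add:
  "diag_group G \<Longrightarrow> a \<in> kerM G \<Longrightarrow> b \<in> kerM G \<Longrightarrow> (\<lambda>i. a i + b i) \<in> kerM G"
  by (simp add: kerM_iff deg_at_add diag_group_nonzero)

lemma kerM_uminus: "diag_group G \<Longrightarrow> a \<in> kerM G \<Longrightarrow> (\<lambda>i. - a i) \<in> kerM G"
  using deg_eq_iff_diff_kerM[of G "\<lambda>i. 0" a] by (simp add: kerM_def)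

lemma kerM_ones: "in_SL G \<Longrightarrow> (\<lambda>i. 1) \<in> kerM G"
  by (simp add: kerM_iff deg_at_def in_SL_def)

lemma mem_torus_pt_self: "x \<in> torus_pt G x"
  unfolding torus_pt_def kerM_def by force

lemma torus_pt_shift_subset:
  assumes "diag_group G" "m \<in> kerM G"
  shows "torus_pt G (\<lambda>i. x i + of_int (m i)) \<subseteq> torus_pt G x"
proof
  fix y assume "y \<in> torus_pt G (\<lambda>i. x i + of_int (m i))"
  then obtain m' where "m' \<in> kerM G" and y: "y = (\<lambda>i. x i + of_int (m i) + of_int (m' i))"
    by (auto simp: torus_pt_def)
  then have "(\<lambda>i. m i + m' i) \<in> kerM G" using kerM_add assms by blast
  moreover have "y = (\<lambda>i. x i + of_int (m i + m' i))" using y by (simp add: add.assoc)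
  ultimately show "y \<in> torus_pt G x" unfolding torus_pt_def by (intro CollectI bexI)
qed

lemma torus_pt_shift:
  assumes "diag_group G" "m \<in> kerM G"
  shows "torus_pt G (\<lambda>i. x i + of_int (m i)) = torus_pt G x"
proof
  have "torus_pt G x
        = torus_pt G (\<lambda>i. (x i + of_int (m i)) + of_int (- m i))" by simp
  also have "\<dots> \<subseteq> torus_pt G (\<lambda>i. x i + of_int (m i))"
    by (rule torus_pt_shift_subset[OF assms(1) kerM_uminus[OF assms]])
  finally show "torus_pt G x \<subseteq> torus_pt G (\<lambda>i. x i + of_int (m i))" .
qed (rule torus_pt_shift_subset[OF assms])

lemma Fcube_shift:
  "Fcube (\<lambda>i. u i + m i) S = (\<lambda>x i. x i + of_int (m i)) ` Fcube u S"
proof -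
  have "(\<lambda>i. of_int (u i + m i) + (if i \<in> S then lam i else 0))
        = (\<lambda>i. (of_int (u i) + (if i \<in> S then lam i else 0)) + of_int (m i))" for lam :: "_ \<Rightarrow> real"
    by (simp add: fun_eq_iff)
  then show ?thesis unfolding Fcube_def by (auto simp: image_iff)
qed

lemma cell_shift:
  assumes "diag_group G" "m \<in> kerM G"
  shows "cell G (\<lambda>i. u i + m i) S = cell G u S"
  by (simp add: cell_def Fcube_shift image_image torus_pt_shift[OF assms])

lemma centre_in_Fcube: "(\<lambda>i. of_int (u i) + (if i \<in> S then 1/2 else 0)) \<in> Fcube u S"
  unfolding Fcube_def by (intro CollectI exI[of _ "\<lambda>i. 1/2"]) auto

lemma centre_in_cell_imp:
  assumes "torus_pt G (\<lambda>i. of_int (u' i) + (if i \<in> S' then 1/2 else 0)) \<in> cell G u S"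
  shows "S' \<subseteq> S" and "S' = S \<Longrightarrow> (\<lambda>i. u' i - u i) \<in> kerM G"
proof -
  obtain lam where lam: "\<forall>i\<in>S. 0 \<le> lam i \<and> lam i \<le> 1" and
    eq_pt: "torus_pt G (\<lambda>i. of_int (u' i) + (if i \<in> S' then 1/2 else 0))
          = torus_pt G (\<lambda>i. of_int (u i) + (if i \<in> S then lam i else 0))"
    using assms by (auto simp: cell_def Fcube_def)
  have "(\<lambda>i. of_int (u' i) + (if i \<in> S' then 1/2 else 0))
        \<in> torus_pt G (\<lambda>i. of_int (u i) + (if i \<in> S then lam i else 0))"
    unfolding eq_pt[symmetric] by (rule mem_torus_pt_self)
  then obtain m where "m \<in> kerM G" and m_eq: "(\<lambda>i. of_int (u' i) + (if i \<in> S' then 1/2 else 0))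
        = (\<lambda>i. of_int (u i) + (if i \<in> S then lam i else 0) + (of_int (m i) :: real))"
    unfolding torus_pt_def by blast
  have m: "of_int (u' i) + (if i \<in> S' then 1/2 else 0)
          = of_int (u i) + (if i \<in> S then lam i else 0) + (of_int (m i) :: real)" for i
    using fun_cong[OF m_eq, of i] by simp
  show "S' \<subseteq> S"
  proof
    fix i assume "i \<in> S'"
    show "i \<in> S"
    proof (rule ccontr)
      assume "i \<notin> S"
      with m[of i] \<open>i \<in> S'\<close> have "2 * of_int (u i + m i - u' i) = (1::real)" by simp
      then have "2 * (u i + m i - u' i) = 1" by linarith
      then show False by presburger
    qed
  qed
  assume "S' = S"
  have "u' i - u i = m i" for i
  proof (cases "i \<in> S")
    case True
    with m[of i] \<open>S' = S\<close> have "of_int (u' i - u i - m i) = lam i - (1/2::real)" by simp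
    moreover have "0 \<le> lam i" "lam i \<le> 1" using lam True by auto
    ultimately have "- 1/2 \<le> (of_int (u' i - u i - m i) :: real)" "of_int (u' i - u i - m i) \<le> (1/2::real)"
      by linarith+
    then show ?thesis by linarith
  next
    case False
    with m[of i] \<open>S' = S\<close> show ?thesis by simp
  qed
  with \<open>m \<in> kerM G\<close> show "(\<lambda>i. u' i - u i) \<in> kerM G" by simp
qed

lemma cell_eq_imp:
  assumes "cell G u S = cell G u' S'"
  shows "S' = S" and "(\<lambda>i. u' i - u i) \<in> kerM G"
proof -
  have "torus_pt G (\<lambda>i. of_int (u' i) + (if i \<in> S' then 1/2 else 0)) \<in> cell G u S"
    and "torus_pt G (\<lambda>i. of_int (u i) + (if i \<in> S then 1/2 else 0)) \<in> cell G u' S'"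
    using assms centre_in_Fcube unfolding cell_def by blast+
  from centre_in_cell_imp[OF this(1)] centre_in_cell_imp(1)[OF this(2)]
  show "S' = S" and "(\<lambda>i. u' i - u i) \<in> kerM G" by auto
qed

lemma rep_cell:
  shows "snd (rep G (cell G u S)) = S" and "(\<lambda>i. fst (rep G (cell G u S)) i - u i) \<in> kerM G"
proof -
  have "cell G u S = cell G (fst (rep G (cell G u S))) (snd (rep G (cell G u S)))"
    unfolding rep_def by (rule someI[of "\<lambda>p. cell G u S = cell G (fst p) (snd p)" "(u, S)"]) simp
  from cell_eq_imp[OF this]
  show "snd (rep G (cell G u S)) = S" and "(\<lambda>i. fst (rep G (cell G u S)) i - u i) \<in> kerM G" .
qed

lemma tail_cell: "diag_group G \<Longrightarrow> tail G (cell G u S) = deg G u"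
  by (simp add: tail_def deg_eq_iff_diff_kerM rep_cell)

lemma head_cell: "diag_group G \<Longrightarrow> head G (cell G u S) = deg G (\<lambda>i. u i + chiS S i)"
  by (simp add: head_def deg_eq_iff_diff_kerM rep_cell)

lemma cdiv_cell: "cdiv G (cell G u S) = chiS S"
  by (simp add: cdiv_def rep_cell)

lemma chiS_inject: "chiS S = chiS S' \<Longrightarrow> S = S'"
  unfolding chiS_def by (metis (full_types) one_neq_zero subsetI subset_antisym)

lemma chiS_Compl: "(\<lambda>i. 1 - chiS S i) = chiS (- S)"
  by (auto simp: chiS_def)

lemma cell_add_ones:
  assumes "diag_group G" "in_SL G"
  shows "cell G (\<lambda>i. u i + chiS S i + chiS (- S) i) S' = cell G u S'"
proof -
  have "(\<lambda>i. u i + chiS S i + chiS (- S) i) = (\<lambda>i. u i + 1)"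
    by (simp add: chiS_def fun_eq_iff)
  then show ?thesis
    using cell_shift[OF assms(1) kerM_ones[OF assms(2)], of u S'] by simp
qed

lemma dual_cell_props:
  assumes "diag_group G" "in_SL G"
  shows "tail G (cell G (\<lambda>i. u i + chiS S i) (- S)) = head G (cell G u S)"
    and "head G (cell G (\<lambda>i. u i + chiS S i) (- S)) = tail G (cell G u S)"
    and "cdiv G (cell G (\<lambda>i. u i + chiS S i) (- S)) = (\<lambda>i. 1 - cdiv G (cell G u S) i)"
proof -
  have "deg G (\<lambda>i. u i + chiS S i + chiS (- S) i) = deg G u"
    using tail_cell[OF assms(1)] cell_add_ones[OF assms] by metis
  then show "head G (cell G (\<lambda>i. u i + chiS S i) (- S)) = tail G (cell G u S)"
    by (simp add: head_cell tail_cell assms)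
qed (simp_all add: tail_cell head_cell cdiv_cell chiS_Compl assms)

lemma dual_cell_unique:
  assumes "diag_group G" "\<eta>' \<in> Delta G" "tail G \<eta>' = head G (cell G u S)"
    and "cdiv G \<eta>' = (\<lambda>i. 1 - cdiv G (cell G u S) i)"
  shows "\<eta>' = cell G (\<lambda>i. u i + chiS S i) (- S)"
proof -
  obtain u' S' where \<eta>': "\<eta>' = cell G u' S'" using assms(2) by (auto simp: Delta_def)
  have "S' = - S"
    using assms(4) by (simp add: \<eta>' cdiv_cell chiS_Compl chiS_inject)
  moreover have "(\<lambda>i. u' i - (u i + chiS S i)) \<in> kerM G"
    using assms(3) by (simp add: \<eta>' tail_cell head_cell assms(1) deg_eq_iff_diff_kerM)
  then have "cell G (\<lambda>i. (u i + chiS S i) + (u' i - (u i + chiS S i))) S'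
           = cell G (\<lambda>i. u i + chiS S i) S'"
    by (rule cell_shift[OF assms(1)])
  then have "cell G u' S' = cell G (\<lambda>i. u i + chiS S i) S'" by simp
  ultimately show ?thesis using \<eta>' by simp
qed

lemma tau_cell:
  assumes "diag_group G" "in_SL G"
  shows "tau G (cell G u S) = cell G (\<lambda>i. u i + chiS S i) (- S)"
  unfolding tau_def
proof (rule the_equality)
  show "cell G (\<lambda>i. u i + chiS S i) (- S) \<in> Delta G
    \<and> tail G (cell G (\<lambda>i. u i + chiS S i) (- S)) = head G (cell G u S)
    \<and> head G (cell G (\<lambda>i. u i + chiS S i) (- S)) = tail G (cell G u S)
    \<and> cdiv G (cell G (\<lambda>i. u i + chiS S i) (- S)) = (\<lambda>i. 1 - cdiv G (cell G u S) i)"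
    using dual_cell_props[OF assms] by (auto simp: Delta_def)
qed (simp add: dual_cell_unique[OF assms(1)])

theorem proposition4p6:
  fixes G :: "('n::finite \<Rightarrow> 'k::alg_closed_field) set"
  assumes "diag_group G"
    and "in_SL G"
    and "of_nat (card G) \<noteq> (0::'k)"
  shows "(\<forall>k. \<forall>\<eta>\<in>Delta_k G k. \<exists>!\<eta>'. \<eta>' \<in> Delta_k G (card (UNIV :: 'n set) - k)
            \<and> tail G \<eta>' = head G \<eta> \<and> head G \<eta>' = tail G \<eta>
            \<and> cdiv G \<eta>' = (\<lambda>i. 1 - cdiv G \<eta> i))
       \<and> (\<forall>\<eta>\<in>Delta G. tau G \<eta> \<in> Delta G \<and> tau G (tau G \<eta>) = \<eta>)"
proof (intro conjI allI ballI)
  fix k \<eta> assume "\<eta> \<in> Delta_k G k"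
  then obtain u S where \<eta>: "\<eta> = cell G u S" and "card S = k" by (auto simp: Delta_k_def)
  then have "card (- S) = card (UNIV :: 'n set) - k"
    by (simp add: Compl_eq_Diff_UNIV card_Diff_subset)
  then have "cell G (\<lambda>i. u i + chiS S i) (- S) \<in> Delta_k G (card (UNIV :: 'n set) - k)"
    by (auto simp: Delta_k_def)
  moreover have "Delta_k G (card (UNIV :: 'n set) - k) \<subseteq> Delta G"
    by (auto simp: Delta_k_def Delta_def)
  ultimately show "\<exists>!\<eta>'. \<eta>' \<in> Delta_k G (card (UNIV :: 'n set) - k)
            \<and> tail G \<eta>' = head G \<eta> \<and> head G \<eta>' = tail G \<eta>
            \<and> cdiv G \<eta>' = (\<lambda>i. 1 - cdiv G \<eta> i)"
    unfolding \<eta>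
    by (intro ex1I[of _ "cell G (\<lambda>i. u i + chiS S i) (- S)"])
      (simp_all add: dual_cell_props assms subset_iff dual_cell_unique)
next
  fix \<eta> assume "\<eta> \<in> Delta G"
  then obtain u S where \<eta>: "\<eta> = cell G u S" by (auto simp: Delta_def)
  show "tau G \<eta> \<in> Delta G"
    by (auto simp: \<eta> tau_cell assms Delta_def)
  show "tau G (tau G \<eta>) = \<eta>"
    by (simp add: \<eta> tau_cell cell_add_ones assms)
qed

end
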